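(* Let $\mu>0$, $\ell_S>0$, let $\Delta$ be a positive integer, and set $a_S=\ell_S/\mu$, \[ \rho_S=\sqrt{1-\frac{2}{\sqrt{1+\Delta a_S}+1}},\qquad \lambda_S=\begin{cases}\frac{\Delta a_S}{3+3\Delta a_S}&\text{if }\Delta a_S<48,\\[2pt]\max\Big(\frac{\Delta a_S}{3+3\Delta a_S},\ \big(1-4\sqrt3(\Delta a_S)^{-1/2}\big)^2\Big)&\text{otherwise.}\end{cases} \] Then $\rho_S^{32}\le\lambda_S$. *)

theory Defs
  imports Complex_Main
begin

end

theory Submission
  imports Defs
begin

text \<open>
  Put \<open>s = sqrt (1 + x)\<close> and \<open>t = 1 - 2 / (s + 1) = (s - 1) / (s + 1)\<close>, so that
  \<open>rhoS ^ 32 = t ^ 16\<close>. The first branch of \<open>lambdaS\<close> equals \<open>4 t / (3 (1 + t)^2)\<close>,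
  which dominates \<open>t ^ 16\<close> as soon as \<open>3 t ^ 15 (1 + t)^2 \<le> 4\<close>; this holds for
  \<open>t \<le> 13/14\<close>, i.e. for \<open>s \<le> 27\<close>. For \<open>s \<ge> 27\<close> (hence \<open>x \<ge> 48\<close>), Bernoulli's
  inequality for \<open>t = 1 - u\<close>, \<open>u = 2 / (s + 1)\<close>, gives
  \<open>t ^ 8 \<le> 1 / (1 + 8 u) = (s + 1) / (s + 17)\<close>, which is at most \<open>1 - 4 sqrt 3 / sqrt x\<close>.
\<close>

lemma one_minus_power_mult_le_one:
  fixes u :: real
  assumes "0 \<le> u" "u \<le> 1"
  shows "(1 - u) ^ n * (1 + n * u) \<le> 1"
proof -
  have "(1 - u) ^ n * (1 + n * u) \<le> (1 - u) ^ n * (1 + u) ^ n"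
    using Bernoulli_inequality[of u n] assms by (intro mult_left_mono) auto
  also have "\<dots> = (1 - u * u) ^ n"
    by (simp add: power_mult_distrib[symmetric] algebra_simps)
  also have "\<dots> \<le> 1"
    using assms by (intro power_le_one) (auto simp: mult_le_one)
  finally show ?thesis .
qed

lemma one_minus_two_div_power8_le:
  fixes s :: real
  assumes "1 < s"
  shows "(1 - 2 / (s + 1)) ^ 8 \<le> (s + 1) / (s + 17)"
proof -
  define u where "u = 2 / (s + 1)"
  have "0 \<le> u" "u \<le> 1"
    using assms by (auto simp: u_def)
  then have "(1 - u) ^ 8 * (1 + 8 * u) \<le> 1"
    using one_minus_power_mult_le_one[of u 8] by simp
  then have "(1 - u) ^ 8 \<le> 1 / (1 + 8 * u)"
    using \<open>0 \<le> u\<close> by (simp add: pos_le_divide_eq)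
  also have "1 / (1 + 8 * u) = (s + 1) / (s + 17)"
    using assms by (simp add: u_def field_simps)
  finally show ?thesis
    by (simp add: u_def)
qed

lemma power15_mult_square_le:
  fixes t :: real
  assumes "0 \<le> t" "t \<le> 13 / 14"
  shows "3 * t ^ 15 * (1 + t)\<^sup>2 \<le> 4"
proof -
  have "3 * t ^ 15 * (1 + t)\<^sup>2 \<le> 3 * (13 / 14) ^ 15 * (27 / 14)\<^sup>2"
    using assms by (intro mult_mono power_mono) auto
  also have "\<dots> \<le> 4"
    by (simp add: power_divide)
  finally show ?thesis .
qed

lemma one_minus_two_div_power16_le:
  fixes s :: real
  assumes "1 < s" "s \<le> 27"
  shows "(1 - 2 / (s + 1)) ^ 16 \<le> (s\<^sup>2 - 1) / (3 * s\<^sup>2)"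
proof -
  define t where "t = 1 - 2 / (s + 1)"
  have t_bounds: "0 \<le> t" "t \<le> 13 / 14"
    using assms by (auto simp: t_def field_simps)
  have "t ^ 16 = t * t ^ 15"
    by (simp flip: power_Suc)
  also have "\<dots> \<le> t * (4 / (3 * (1 + t)\<^sup>2))"
    using power15_mult_square_le[OF t_bounds] t_bounds
    by (intro mult_left_mono) (auto simp: field_simps)
  also have "\<dots> = (s\<^sup>2 - 1) / (3 * s\<^sup>2)"
  proof -
    have t_eq: "t = (s - 1) / (s + 1)" and one_plus_t_eq: "1 + t = 2 * s / (s + 1)"
      using assms by (simp_all add: t_def field_simps)
    show ?thesis
      unfolding one_plus_t_eq unfolding t_eq using assms
      by (simp add: divide_simps power2_eq_square) (simp add: algebra_simps)
  qed
  finally show ?thesis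
    by (simp add: t_def)
qed

lemma add1_div_add17_le_one_minus_sqrt:
  fixes s :: real
  assumes "27 \<le> s"
  shows "(s + 1) / (s + 17) \<le> 1 - 4 * sqrt 3 / sqrt (s\<^sup>2 - 1)"
proof -
  have "sqrt 3 * (s + 17) = sqrt (3 * (s + 17)\<^sup>2)"
    using assms by (simp add: real_sqrt_mult)
  also have "\<dots> \<le> sqrt (16 * (s\<^sup>2 - 1))"
  proof (rule real_sqrt_le_mono)
    have "351 * s \<le> 13 * s\<^sup>2"
      using assms by (simp add: power2_eq_square)
    moreover have "3 * (s + 17)\<^sup>2 = 3 * s\<^sup>2 + 102 * s + 867"
      by (simp add: power2_eq_square algebra_simps)
    ultimately show "3 * (s + 17)\<^sup>2 \<le> 16 * (s\<^sup>2 - 1)"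
      using assms by (simp add: algebra_simps)
  qed
  also have "\<dots> = 4 * sqrt (s\<^sup>2 - 1)"
    unfolding real_sqrt_mult by simp
  finally have "sqrt 3 * (s + 17) \<le> 4 * sqrt (s\<^sup>2 - 1)" .
  moreover have "0 < sqrt (s\<^sup>2 - 1)"
    using assms one_less_power[of s 2] by simp
  ultimately show ?thesis
    using assms by (simp add: field_simps)
qed

theorem lemmaG2:
  fixes mu lS :: real and Delta :: nat
  assumes "mu > 0" and "lS > 0" and "Delta \<ge> 1"
  shows "let aS = lS / mu;
             x = real Delta * aS;
             rhoS = sqrt (1 - 2 / (sqrt (1 + x) + 1));
             lambdaS = (if x < 48 then x / (3 + 3 * x)
                        else max (x / (3 + 3 * x)) ((1 - 4 * sqrt 3 * x powr (-1/2)) ^ 2))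
         in rhoS ^ 32 \<le> lambdaS"
proof -
  define x where "x = real Delta * (lS / mu)"
  define s where "s = sqrt (1 + x)"
  define t where "t = 1 - 2 / (s + 1)"
  have "0 < x"
    using assms by (simp add: x_def)
  then have s_gt_1: "1 < s" and x_eq: "x = s\<^sup>2 - 1"
    by (simp_all add: s_def)
  have "0 \<le> t"
    using s_gt_1 by (simp add: t_def)
  then have "sqrt t ^ 32 = t ^ 16"
    using power_mult[of "sqrt t" 2 16] by simp
  moreover have "t ^ 16 \<le> (if x < 48 then x / (3 + 3 * x)
                             else max (x / (3 + 3 * x)) ((1 - 4 * sqrt 3 * x powr (-1/2)) ^ 2))"
  proof (cases "s \<le> 27")
    case True
    have "x / (3 + 3 * x) = (s\<^sup>2 - 1) / (3 * s\<^sup>2)"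
      by (simp add: x_eq algebra_simps)
    then show ?thesis
      using one_minus_two_div_power16_le[OF s_gt_1 True] by (auto simp: t_def)
  next
    case False
    have "t ^ 8 \<le> 1 - 4 * sqrt 3 * x powr (-1/2)"
      using one_minus_two_div_power8_le[OF s_gt_1] add1_div_add17_le_one_minus_sqrt[of s]
        False \<open>0 < x\<close>
      by (simp add: t_def x_eq powr_minus_divide powr_half_sqrt)
    then have "t ^ 16 \<le> (1 - 4 * sqrt 3 * x powr (-1/2)) ^ 2"
      using \<open>0 \<le> t\<close> power_mono[of "t ^ 8" _ 2] by (simp add: power_mult[symmetric])
    moreover have "\<not> x < 48"
      using False mult_mono[of 27 s 27 s] by (simp add: x_eq power2_eq_square)
    ultimately show ?thesis
      by auto
  qed
  ultimately show ?thesis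
    unfolding Let_def x_def[symmetric] s_def[symmetric] t_def[symmetric] by simp
qed

end
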